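(* Let $\Sigma$ be a finite alphabet. For every unranked ordered $\Sigma$-labeled tree $t$, $|\mathrm{hdag}(t)| \le \min(|\mathrm{dag}(t)|, |\mathrm{bdag}(t)|)$.
   Context: An unranked tree over $\Sigma$ is a finite rooted tree with nodes labeled in $\Sigma$ and linearly ordered children (arbitrary finite number). Size means number of edges. $\mathrm{dag}(t)$ is the minimal dag of $t$: its nodes are the distinct subtrees of $t$, and the node of a subtree $f(s_1,\dots,s_k)$ has $k$ ordered edges to the nodes of $s_1,\dots,s_k$; thus $|\mathrm{dag}(t)|$ equals the sum, over all distinct subtrees $s$ of $t$, of the number of children of the root of $s$. The first-child/next-sibling encoding $\mathrm{fcns}$ maps a sequence of unranked trees to a binary tree (each node has an optional left and optional right child): $\mathrm{fcns}(\varepsilon)$ is empty and $\mathrm{fcns}(t_1t_2\cdots t_n)=f(\mathrm{fcns}(u_1\cdots u_m),\mathrm{fcns}(t_2\cdots t_n))$ when $t_1=f(u_1,\dots,u_m)$ (left child = first child, right child = next sibling). $\mathrm{bdag}(t)$ is the minimal dag of $\mathrm{fcns}(t)$ (identical subtrees merged), and $|\mathrm{bdag}(t)|$ its number of edges (edges to absent children are not counted). Hybrid dag: for each distinct subtree $s=f(s_1,\dots,s_k)$ of $t$ with $k\ge1$ introduce a fresh symbol $A_s$ and the height-one tree $\rho_s=f(\alpha_1,\dots,\alpha_k)$, where $\alpha_i$ is the label of $s_i$ if $s_i$ is a single node and $\alpha_i=A_{s_i}$ otherwise (the $\alpha_i$ are leaves). Let $\rho'_s$ be $\rho_s$ with its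 root additionally marked by $A_s$. Then $\mathrm{hdag}(t)$ is the minimal dag of the forest consisting of the binary trees $\mathrm{fcns}(\rho'_s)$ (identical subtrees anywhere in the forest are merged), and $|\mathrm{hdag}(t)|$ is its number of edges (edges to absent children not counted). *)

theory Defs
  imports Main
begin

datatype 'a utree = UNode 'a "'a utree list"

text \<open>Binary trees with optional children: BLeaf = absent child.\<close>
datatype 'a btree = BLeaf | BNode 'a "'a btree" "'a btree"

fun usubtrees :: "'a utree \<Rightarrow> 'a utree set" where
  "usubtrees (UNode f ts) = insert (UNode f ts) (\<Union>s\<in>set ts. usubtrees s)"

fun nchildren :: "'a utree \<Rightarrow> nat" where
  "nchildren (UNode f ts) = length ts"

text \<open>Size (number of edges) of the minimal dag.\<close>
definition dag_size :: "'a utree \<Rightarrow> nat" where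
  "dag_size t = (\<Sum>s\<in>usubtrees t. nchildren s)"

text \<open>First-child/next-sibling encoding of a sequence of trees.\<close>
fun fcns :: "'a utree list \<Rightarrow> 'a btree" where
  "fcns [] = BLeaf"
| "fcns (UNode f us # ts) = BNode f (fcns us) (fcns ts)"

fun bsubtrees :: "'a btree \<Rightarrow> 'a btree set" where
  "bsubtrees BLeaf = {}"
| "bsubtrees (BNode a l r) = insert (BNode a l r) (bsubtrees l \<union> bsubtrees r)"

fun bedges :: "'a btree \<Rightarrow> nat" where
  "bedges BLeaf = 0"
| "bedges (BNode a l r) = (if l = BLeaf then 0 else 1) + (if r = BLeaf then 0 else 1)"

text \<open>Number of edges of the minimal dag of a forest (set) of binary trees.\<close>
definition bforest_dag_size :: "'a btree set \<Rightarrow> nat" where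
  "bforest_dag_size F = (\<Sum>s\<in>(\<Union>b\<in>F. bsubtrees b). bedges s)"

definition bdag_size :: "'a utree \<Rightarrow> nat" where
  "bdag_size t = bforest_dag_size {fcns [t]}"

text \<open>Labels for the hybrid dag: original symbols, fresh nonterminals A_s
  (identified by the subtree s), and root labels f marked with A_s.\<close>
datatype 'a hlabel = Sym 'a | Nt "'a utree" | Root 'a "'a utree"

fun alpha :: "'a utree \<Rightarrow> 'a hlabel utree" where
  "alpha (UNode g us) = (if us = [] then UNode (Sym g) [] else UNode (Nt (UNode g us)) [])"

fun rho' :: "'a utree \<Rightarrow> 'a hlabel utree" where
  "rho' (UNode f ss) = UNode (Root f (UNode f ss)) (map alpha ss)"

definition hdag_size :: "'a utree \<Rightarrow> nat" where
  "hdag_size t = bforest_dag_size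
     ((\<lambda>s. fcns [rho' s]) ` {s \<in> usubtrees t. nchildren s \<ge> 1})"

end

theory Submission
  imports Defs
begin

text \<open>Every edge of the hybrid dag is either the first-child edge of a root marked by some
  \<open>A\<^sub>s\<close>, one per subtree \<open>s\<close> with children, or a next-sibling edge inside the encoding
  \<open>fcns(\<alpha>\<^sub>i \<dots> \<alpha>\<^sub>k)\<close> of a suffix of length at least two of some children list; equal suffixes
  are shared. So \<open>|hdag(t)|\<close> is at most the number of inner subtrees plus the number of such
  suffixes. Both counts are bounded by the dag: a subtree with \<open>k \<ge> 1\<close> children contributes
  \<open>1 + (k - 1) = k\<close>. Both are also bounded by the bdag: the binary subtree \<open>fcns(s u\<^sub>1 \<dots> u\<^sub>m)\<close>
  headed by an inner subtree \<open>s\<close> has a left edge, and for every such suffix \<open>L\<close> the binary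
  subtree \<open>fcns(L)\<close> has a right edge, both assignments being injective.\<close>

lemma sum_le_card_of_le_1:
  fixes f :: "'b \<Rightarrow> nat"
  assumes "finite B" "\<And>x. x \<in> A \<Longrightarrow> f x \<le> 1" "\<And>x. x \<in> A \<Longrightarrow> f x \<noteq> 0 \<Longrightarrow> x \<in> B"
  shows "sum f A \<le> card B"
proof (cases "finite A")
  case True
  have "sum f A = sum f (A \<inter> B)"
    using True assms(3) by (intro sum.mono_neutral_right) auto
  also have "\<dots> \<le> card (A \<inter> B)"
    using sum_bounded_above[of "A \<inter> B" f 1] assms(2) by auto
  also have "\<dots> \<le> card B"
    using assms(1) by (intro card_mono) auto
  finally show ?thesis .
qed simp

lemma card_le_sum_of_ge_1:
  fixes f :: "'b \<Rightarrow> nat"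
  assumes "finite B" "A \<subseteq> B" "\<And>x. x \<in> A \<Longrightarrow> 1 \<le> f x"
  shows "card A \<le> sum f B"
proof -
  have "card A \<le> sum f A"
    using sum_bounded_below[of A 1 f] assms(3) by simp
  also have "\<dots> \<le> sum f B"
    using assms(1,2) by (rule sum_mono2) simp
  finally show ?thesis .
qed

fun children :: "'a utree \<Rightarrow> 'a utree list" where
  "children (UNode f ts) = ts"

lemma nchildren_eq_length_children: "nchildren s = length (children s)"
  by (cases s) simp

lemma finite_usubtrees: "finite (usubtrees t)"
  by (induction t) auto

lemma usubtrees_parent:
  "p \<in> usubtrees t \<Longrightarrow> p \<noteq> t \<Longrightarrow> \<exists>q\<in>usubtrees t. p \<in> set (children q)"
proof (induction t)
  case (UNode f ts)
  then obtain c where c: "c \<in> set ts" "p \<in> usubtrees c" by auto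
  show ?case
  proof (cases "p = c")
    case True
    with c show ?thesis by auto
  next
    case False
    with UNode.IH c obtain q where "q \<in> usubtrees c" "p \<in> set (children q)" by blast
    with c show ?thesis by auto
  qed
qed

definition inner_subtrees :: "'a utree \<Rightarrow> 'a utree set" where
  "inner_subtrees t = {s \<in> usubtrees t. 1 \<le> nchildren s}"

definition sibling_suffixes :: "'a utree \<Rightarrow> 'a utree list set" where
  "sibling_suffixes t = (\<Union>p\<in>usubtrees t. (\<lambda>i. drop i (children p)) ` {..<nchildren p - 1})"

lemma finite_inner_subtrees: "finite (inner_subtrees t)"
  unfolding inner_subtrees_def using finite_usubtrees[of t] by simp

lemma finite_sibling_suffixes: "finite (sibling_suffixes t)"
  unfolding sibling_suffixes_def using finite_usubtrees[of t] by simp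

lemma length_sibling_suffix: "L \<in> sibling_suffixes t \<Longrightarrow> 2 \<le> length L"
  unfolding sibling_suffixes_def by (auto simp: nchildren_eq_length_children)

lemma card_inner_subtrees_plus:
  "card (inner_subtrees t) + (\<Sum>p\<in>usubtrees t. nchildren p - 1) = dag_size t"
proof -
  have "card (inner_subtrees t) = (\<Sum>p\<in>usubtrees t. if 1 \<le> nchildren p then 1 else 0)"
    unfolding inner_subtrees_def card_eq_sum
    using sum.inter_filter[OF finite_usubtrees, of "\<lambda>_. 1 :: nat"] by simp
  then show ?thesis
    unfolding dag_size_def by (auto simp: sum.distrib[symmetric] intro!: sum.cong)
qed

lemma card_sibling_suffixes_le:
  "card (sibling_suffixes t) \<le> (\<Sum>p\<in>usubtrees t. nchildren p - 1)"
proof -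
  have "card (sibling_suffixes t)
      \<le> (\<Sum>p\<in>usubtrees t. card ((\<lambda>i. drop i (children p)) ` {..<nchildren p - 1}))"
    unfolding sibling_suffixes_def using finite_usubtrees by (rule card_UN_le)
  also have "\<dots> \<le> (\<Sum>p\<in>usubtrees t. nchildren p - 1)"
    by (intro sum_mono) (metis card_image_le card_lessThan finite_lessThan)
  finally show ?thesis .
qed

lemma inner_subtrees_plus_sibling_suffixes_le_dag_size:
  "card (inner_subtrees t) + card (sibling_suffixes t) \<le> dag_size t"
  using card_sibling_suffixes_le[of t] card_inner_subtrees_plus[of t] by linarith

lemma finite_bsubtrees: "finite (bsubtrees b)"
  by (induction b) auto

lemma fcns_eq_BLeaf_iff: "fcns xs = BLeaf \<longleftrightarrow> xs = []"
  by (cases xs rule: fcns.cases) auto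

lemma fcns_inject: "fcns xs = fcns ys \<Longrightarrow> xs = ys"
proof (induction xs arbitrary: ys rule: fcns.induct)
  case 1
  then show ?case using fcns_eq_BLeaf_iff[of ys] by simp
next
  case (2 f us ts)
  then show ?case by (cases ys rule: fcns.cases) auto
qed

lemma fcns_Cons: "fcns (u # us) = BNode (case u of UNode f _ \<Rightarrow> f) (fcns (children u)) (fcns us)"
  by (cases u) simp

lemma fcns_in_bsubtrees: "us \<noteq> [] \<Longrightarrow> fcns us \<in> bsubtrees (fcns us)"
  by (cases us rule: fcns.cases) auto

lemma bsubtrees_fcns_drop: "bsubtrees (fcns (drop i us)) \<subseteq> bsubtrees (fcns us)"
proof (induction us arbitrary: i)
  case (Cons u us)
  then show ?case by (cases i) (auto simp: fcns_Cons)
qed simp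

lemma bsubtrees_fcns_children:
  assumes "u \<in> set us"
  shows "bsubtrees (fcns (children u)) \<subseteq> bsubtrees (fcns us)"
proof -
  obtain pre L where "us = pre @ u # L"
    using split_list[OF assms] by blast
  then have "drop (length pre) us = u # L" by simp
  then show ?thesis
    using bsubtrees_fcns_drop[of "length pre" us] by (auto simp: fcns_Cons)
qed

lemma bsubtrees_fcns_children_usubtree:
  "p \<in> usubtrees t \<Longrightarrow> bsubtrees (fcns (children p)) \<subseteq> bsubtrees (fcns (children t))"
proof (induction t)
  case (UNode f ts)
  show ?case
  proof (cases "p = UNode f ts")
    case False
    then obtain c where "c \<in> set ts" "p \<in> usubtrees c" using UNode.prems by auto
    with UNode.IH bsubtrees_fcns_children show ?thesis by fastforce
  qed simp
qed

lemma bsubtrees_fcns_singleton: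
  "bsubtrees (fcns [t]) = insert (fcns [t]) (bsubtrees (fcns (children t)))"
  by (cases t) auto

lemma fcns_drop_children_in_bsubtrees:
  assumes "p \<in> usubtrees t" "i < length (children p)"
  shows "fcns (drop i (children p)) \<in> bsubtrees (fcns [t])"
  using fcns_in_bsubtrees[of "drop i (children p)"] bsubtrees_fcns_drop[of i "children p"]
    bsubtrees_fcns_children_usubtree[OF assms(1)] bsubtrees_fcns_singleton[of t] assms(2)
  by auto

lemma fcns_headed_by_usubtree:
  assumes "p \<in> usubtrees t"
  shows "\<exists>L. fcns (p # L) \<in> bsubtrees (fcns [t])"
proof (cases "p = t")
  case True
  then show ?thesis by (auto simp: bsubtrees_fcns_singleton)
next
  case False
  with assms obtain q where q: "q \<in> usubtrees t" "p \<in> set (children q)"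
    using usubtrees_parent by blast
  then obtain pre L where "children q = pre @ p # L"
    using split_list by metis
  then have "drop (length pre) (children q) = p # L" "length pre < length (children q)"
    by simp_all
  then show ?thesis
    using fcns_drop_children_in_bsubtrees[OF q(1)] by metis
qed

fun bedges_left :: "'a btree \<Rightarrow> nat" where
  "bedges_left BLeaf = 0"
| "bedges_left (BNode a l r) = (if l = BLeaf then 0 else 1)"

fun bedges_right :: "'a btree \<Rightarrow> nat" where
  "bedges_right BLeaf = 0"
| "bedges_right (BNode a l r) = (if r = BLeaf then 0 else 1)"

lemma bedges_eq_left_plus_right: "bedges b = bedges_left b + bedges_right b"
  by (cases b) auto

lemma inner_subtrees_le_bedges_left:
  "card (inner_subtrees t) \<le> sum bedges_left (bsubtrees (fcns [t]))"
proof -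
  have "\<forall>s\<in>inner_subtrees t. \<exists>L. fcns (s # L) \<in> bsubtrees (fcns [t])"
    unfolding inner_subtrees_def using fcns_headed_by_usubtree by blast
  then obtain sib where sib: "\<And>s. s \<in> inner_subtrees t \<Longrightarrow> fcns (s # sib s) \<in> bsubtrees (fcns [t])"
    by metis
  let ?h = "\<lambda>s. fcns (s # sib s)"
  have "inj_on ?h (inner_subtrees t)"
    by (rule inj_onI) (auto dest: fcns_inject)
  then have "card (inner_subtrees t) = card (?h ` inner_subtrees t)"
    by (simp add: card_image)
  also have "\<dots> \<le> sum bedges_left (bsubtrees (fcns [t]))"
  proof (rule card_le_sum_of_ge_1[OF finite_bsubtrees])
    show "?h ` inner_subtrees t \<subseteq> bsubtrees (fcns [t])" using sib by blast
    show "1 \<le> bedges_left b" if "b \<in> ?h ` inner_subtrees t" for b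
      using that by (auto simp: inner_subtrees_def fcns_Cons fcns_eq_BLeaf_iff
          nchildren_eq_length_children)
  qed
  finally show ?thesis .
qed

lemma sibling_suffixes_le_bedges_right:
  "card (sibling_suffixes t) \<le> sum bedges_right (bsubtrees (fcns [t]))"
proof -
  have "card (sibling_suffixes t) = card (fcns ` sibling_suffixes t)"
    by (rule card_image[symmetric]) (auto intro: inj_onI fcns_inject)
  also have "\<dots> \<le> sum bedges_right (bsubtrees (fcns [t]))"
  proof (rule card_le_sum_of_ge_1[OF finite_bsubtrees])
    show "fcns ` sibling_suffixes t \<subseteq> bsubtrees (fcns [t])"
      unfolding sibling_suffixes_def
      by (auto simp: nchildren_eq_length_children intro: fcns_drop_children_in_bsubtrees)
    show "1 \<le> bedges_right b" if "b \<in> fcns ` sibling_suffixes t" for b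
    proof -
      obtain L where "L \<in> sibling_suffixes t" "b = fcns L"
        using \<open>b \<in> fcns ` sibling_suffixes t\<close> by blast
      moreover obtain u v L' where "L = u # v # L'"
        using length_sibling_suffix[OF \<open>L \<in> sibling_suffixes t\<close>]
        by (metis Suc_le_length_iff numeral_2_eq_2)
      ultimately show ?thesis by (simp add: fcns_Cons)
    qed
  qed
  finally show ?thesis .
qed

lemma inner_subtrees_plus_sibling_suffixes_le_bdag_size:
  "card (inner_subtrees t) + card (sibling_suffixes t) \<le> bdag_size t"
  using inner_subtrees_le_bedges_left[of t] sibling_suffixes_le_bedges_right[of t]
  by (simp add: bdag_size_def bforest_dag_size_def bedges_eq_left_plus_right sum.distrib)

lemma fcns_alpha_Cons: "\<exists>a. fcns (alpha u # us) = BNode a BLeaf (fcns us)"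
  by (cases u) auto

lemma bsubtrees_fcns_alpha:
  "bsubtrees (fcns (map alpha L)) = (\<lambda>i. fcns (map alpha (drop i L))) ` {..<length L}"
proof (induction L)
  case (Cons u L)
  obtain a where "fcns (alpha u # map alpha L) = BNode a BLeaf (fcns (map alpha L))"
    using fcns_alpha_Cons by blast
  then show ?case
    using Cons.IH by (simp add: lessThan_Suc_eq_insert_0 image_image)
qed simp

lemma bedges_fcns_alpha: "bedges (fcns (map alpha L)) = (if 2 \<le> length L then 1 else 0)"
proof (cases L)
  case (Cons u L')
  then obtain a where "fcns (map alpha L) = BNode a BLeaf (fcns (map alpha L'))"
    using fcns_alpha_Cons by fastforce
  with Cons show ?thesis by (cases L') (auto simp: fcns_eq_BLeaf_iff)
qed simp

lemma bsubtrees_fcns_rho':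
  "bsubtrees (fcns [rho' s]) = insert (fcns [rho' s])
     ((\<lambda>i. fcns (map alpha (drop i (children s)))) ` {..<nchildren s})"
  by (cases s) (simp add: bsubtrees_fcns_alpha)

lemma bedges_fcns_rho'_le_1: "bedges (fcns [rho' s]) \<le> 1"
  by (cases s) simp

lemma hdag_size_le_inner_subtrees_plus_sibling_suffixes:
  "hdag_size t \<le> card (inner_subtrees t) + card (sibling_suffixes t)"
proof -
  let ?roots = "(\<lambda>s. fcns [rho' s]) ` inner_subtrees t"
  let ?chains = "(\<lambda>L. fcns (map alpha L)) ` sibling_suffixes t"
  have "hdag_size t = sum bedges (\<Union>s\<in>inner_subtrees t. bsubtrees (fcns [rho' s]))"
    by (simp add: hdag_size_def bforest_dag_size_def inner_subtrees_def)
  also have "\<dots> \<le> card (?roots \<union> ?chains)"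
  proof (rule sum_le_card_of_le_1)
    show "finite (?roots \<union> ?chains)"
      using finite_inner_subtrees[of t] finite_sibling_suffixes[of t] by simp
  next
    fix b assume "b \<in> (\<Union>s\<in>inner_subtrees t. bsubtrees (fcns [rho' s]))"
    then obtain s where s: "s \<in> inner_subtrees t" "b \<in> bsubtrees (fcns [rho' s])" by blast
    then consider "b = fcns [rho' s]"
      | i where "i < nchildren s" "b = fcns (map alpha (drop i (children s)))"
      by (auto simp: bsubtrees_fcns_rho')
    then have "bedges b \<le> 1 \<and> (bedges b \<noteq> 0 \<longrightarrow> b \<in> ?roots \<union> ?chains)"
    proof cases
      case 1
      then show ?thesis using s(1) bedges_fcns_rho'_le_1 by auto
    next
      case (2 i)
      have "drop i (children s) \<in> sibling_suffixes t" if "i < nchildren s - 1"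
        using s(1) that by (auto simp: inner_subtrees_def sibling_suffixes_def)
      with 2 show ?thesis
        by (auto simp: bedges_fcns_alpha nchildren_eq_length_children)
    qed
    then show "bedges b \<le> 1" "bedges b \<noteq> 0 \<Longrightarrow> b \<in> ?roots \<union> ?chains" by auto
  qed
  also have "\<dots> \<le> card (inner_subtrees t) + card (sibling_suffixes t)"
    by (meson add_mono card_Un_le card_image_le finite_inner_subtrees
        finite_sibling_suffixes order_trans)
  finally show ?thesis .
qed

theorem theorem1:
  fixes t :: "'a::finite utree"
  shows "hdag_size t \<le> min (dag_size t) (bdag_size t)"
  using hdag_size_le_inner_subtrees_plus_sibling_suffixes[of t]
    inner_subtrees_plus_sibling_suffixes_le_dag_size[of t]
    inner_subtrees_plus_sibling_suffixes_le_bdag_size[of t]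
  by simp

end
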